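(* Let $d = 10$. (i) If $n = (4(12m+9)+2) + 4(6k+3)\sqrt{10}$ with $m, k \in \mathbb{Z}$, $m \equiv 4 \pmod 5$ and $k \equiv 2 \pmod 5$, then there exist infinitely many $D(n)$-quadruples in $\mathbb{Z}[\sqrt{10}]$. (ii) If $n = (48m+2) + 24k\sqrt{10}$ with $m, k \in \mathbb{Z}$, $m \equiv 1 \pmod 5$ and $k \equiv 0 \pmod 5$, then there exist infinitely many $D(n)$-quadruples in $\mathbb{Z}[\sqrt{10}]$.
   Context: For $n \in \mathbb{Z}[\sqrt{d}]$, a set $\{a_1,a_2,a_3,a_4\}$ of four distinct non-zero elements of $\mathbb{Z}[\sqrt{d}]$ is called a $D(n)$-quadruple in $\mathbb{Z}[\sqrt{d}]$ if $a_ia_j + n$ is a square of an element of $\mathbb{Z}[\sqrt{d}]$ for all $1 \le i < j \le 4$. *)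

theory Defs
  imports Main
begin

text \<open>Elements of Z[sqrt d] are represented as pairs (a, b) of integers,
standing for a + b * sqrt d.  Here d is a fixed non-square integer (d = 10).\<close>

type_synonym zsqrt = "int \<times> int"

definition zs_add :: "zsqrt \<Rightarrow> zsqrt \<Rightarrow> zsqrt" where
  "zs_add x y = (fst x + fst y, snd x + snd y)"

definition zs_mult :: "int \<Rightarrow> zsqrt \<Rightarrow> zsqrt \<Rightarrow> zsqrt" where
  "zs_mult d x y = (fst x * fst y + d * snd x * snd y, fst x * snd y + snd x * fst y)"

definition zs_is_square :: "int \<Rightarrow> zsqrt \<Rightarrow> bool" where
  "zs_is_square d z \<longleftrightarrow> (\<exists>w. zs_mult d w w = z)"

definition is_Dn_quadruple :: "int \<Rightarrow> zsqrt \<Rightarrow> zsqrt set \<Rightarrow> bool" where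
  "is_Dn_quadruple d n S \<longleftrightarrow>
     card S = 4 \<and> (0, 0) \<notin> S \<and>
     (\<forall>a\<in>S. \<forall>b\<in>S. a \<noteq> b \<longrightarrow> zs_is_square d (zs_add (zs_mult d a b) n))"

end

theory Submission
  imports Defs "HOL-Computational_Algebra.Polynomial"
begin

text \<open>
  For K, M in \<open>\<int>[\<surd>10]\<close> and t = 2K + 1, the elements M, M(3K+1)^2 + 2K\<surd>10,
  M(3K+2)^2 + (2K+2)\<surd>10 and 9Mt^2 + 4t\<surd>10 have the property that the product of any
  two of them plus n = 10 + 2tM\<surd>10 is a square, by polynomial identities. The element n only
  depends on tM = N. Taking t = u^j for the unit u = 19 + 6\<surd>10, which is \<open>\<equiv> 1 (mod 2)\<close>,
  and M = N u^(-j) keeps n = 10 + 2N\<surd>10 fixed. Embedded into \<real>, the four elements times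
  4t are distinct non-zero quadratic polynomials in t, so for all large j they are distinct
  and non-zero, giving infinitely many D(n)-quadruples. Both families of the theorem have this
  shape: N = (12k + 6) + (12m + 7)/5 \<surd>10, respectively N = 12k + (12m - 2)/5 \<surd>10.
\<close>

lemma eventually_poly_power_nonzero:
  fixes u :: real
  assumes "p \<noteq> 0" and "1 < u"
  shows "eventually (\<lambda>j. poly p (u ^ j) \<noteq> 0) sequentially"
proof -
  have "inj (\<lambda>j. u ^ j)"
    using \<open>1 < u\<close> by (auto intro: injI)
  then have "finite ((\<lambda>j. u ^ j) -` {x. poly p x = 0})"
    using poly_roots_finite[OF \<open>p \<noteq> 0\<close>] by (rule finite_vimageI[rotated])
  then show ?thesis
    by (simp add: eventually_cofinite flip: cofinite_eq_sequentially)
qed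

lemma eventually_poly_power_separates:
  fixes u :: real
  assumes "finite Ps" and "0 \<notin> Ps" and "1 < u"
  shows "eventually (\<lambda>j. inj_on (\<lambda>p. poly p (u ^ j)) Ps \<and> 0 \<notin> (\<lambda>p. poly p (u ^ j)) ` Ps) sequentially"
proof -
  have "eventually (\<lambda>j. poly p (u ^ j) \<noteq> poly q (u ^ j)) sequentially" if "p \<noteq> q" for p q
    using eventually_poly_power_nonzero[of "p - q" u] that \<open>1 < u\<close> by simp
  then have "eventually (\<lambda>j. \<forall>p\<in>Ps. \<forall>q\<in>Ps. p \<noteq> q \<longrightarrow> poly p (u ^ j) \<noteq> poly q (u ^ j)) sequentially"
    using \<open>finite Ps\<close> by (auto intro!: eventually_ball_finite)
  moreover have "eventually (\<lambda>j. \<forall>p\<in>Ps. poly p (u ^ j) \<noteq> 0) sequentially"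
    using assms by (auto intro!: eventually_ball_finite eventually_poly_power_nonzero)
  ultimately show ?thesis
    by eventually_elim (auto simp: inj_on_def)
qed

lemma is_Dn_quadruple_finite: "is_Dn_quadruple d n S \<Longrightarrow> finite S"
  by (simp add: is_Dn_quadruple_def card_ge_0_finite)

lemma infinite_family_if_inj_selection:
  assumes "\<forall>S\<in>\<S>. finite S" and "inj_on x I" and "infinite I" and "\<forall>i\<in>I. x i \<in> Q i \<and> Q i \<in> \<S>"
  shows "infinite \<S>"
proof
  assume "finite \<S>"
  with assms(1) have "finite (\<Union>\<S>)" by blast
  moreover have "x ` I \<subseteq> \<Union>\<S>" using assms(4) by blast
  ultimately have "finite (x ` I)" by (rule finite_subset[rotated])
  with assms(2,3) show False using finite_imageD by blast
qed

abbreviation zs_times :: "zsqrt \<Rightarrow> zsqrt \<Rightarrow> zsqrt" (infixl "\<otimes>" 70)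
  where "x \<otimes> y \<equiv> zs_mult 10 x y"

abbreviation zs_plus :: "zsqrt \<Rightarrow> zsqrt \<Rightarrow> zsqrt" (infixl "\<oplus>" 65)
  where "x \<oplus> y \<equiv> zs_add x y"

lemma zs_mult_commute: "x \<otimes> y = y \<otimes> x"
  by (simp add: zs_mult_def algebra_simps)

definition zs_real :: "zsqrt \<Rightarrow> real" where
  "zs_real z = of_int (fst z) + of_int (snd z) * sqrt 10"

lemma zs_real_Pair [simp]: "zs_real (a, b) = of_int a + of_int b * sqrt 10"
  by (simp add: zs_real_def)

lemma zs_real_add [simp]: "zs_real (x \<oplus> y) = zs_real x + zs_real y"
  by (simp add: zs_real_def zs_add_def algebra_simps)

lemma zs_real_mult [simp]: "zs_real (x \<otimes> y) = zs_real x * zs_real y"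
proof -
  have "(a + b * s) * (c + e * s) = a * c + (a * e + b * c) * s + b * e * (s * s)"
    for a b c e s :: real
    by (simp add: algebra_simps)
  then show ?thesis
    by (simp add: zs_real_def zs_mult_def algebra_simps)
qed

lemma int_square_eq_10_times_square_imp_0:
  fixes p q :: int
  assumes "p^2 = 10 * q^2"
  shows "q = 0"
  using assms
proof (induction "nat \<bar>q\<bar>" arbitrary: p q rule: less_induct)
  case less
  show ?case
  proof (rule ccontr)
    assume "q \<noteq> 0"
    have "even p" using less.prems by (metis even_mult_iff even_numeral even_power)
    then obtain a where a: "p = 2 * a" by blast
    then have a_sq: "2 * a^2 = 5 * q^2" using less.prems by (simp add: power2_eq_square)
    then have "even q" by (metis dvd_triv_left even_mult_iff odd_numeral even_power)
    then obtain b where b: "q = 2 * b" by blast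
    have "a^2 = 10 * b^2" using a_sq b by (simp add: power2_eq_square)
    moreover have "nat \<bar>b\<bar> < nat \<bar>q\<bar>" using b \<open>q \<noteq> 0\<close> by auto
    ultimately have "b = 0" using less.hyps by blast
    with b \<open>q \<noteq> 0\<close> show False by simp
  qed
qed

lemma zs_real_eq_0_iff [simp]: "zs_real z = 0 \<longleftrightarrow> z = (0, 0)"
proof
  assume z: "zs_real z = 0"
  obtain p q where pq: "z = (p, q)" by fastforce
  then have p: "of_int p = - of_int q * sqrt 10" using z by simp
  then have "real_of_int (p^2) = real_of_int (10 * q^2)"
    by (simp add: power_mult_distrib)
  then have "q = 0" by (intro int_square_eq_10_times_square_imp_0) (simp only: of_int_eq_iff)
  with p pq show "z = (0, 0)" by simp
qed simp

lemma inj_zs_real: "inj zs_real"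
proof (rule injI)
  fix x y assume "zs_real x = zs_real y"
  then have "zs_real (fst x - fst y, snd x - snd y) = 0" by (simp add: zs_real_def algebra_simps)
  then show "x = y" by (simp only: zs_real_eq_0_iff) (simp add: prod_eq_iff)
qed

definition dn_b :: "zsqrt \<Rightarrow> zsqrt \<Rightarrow> zsqrt" where
  "dn_b K M = M \<otimes> ((3,0) \<otimes> K \<oplus> (1,0)) \<otimes> ((3,0) \<otimes> K \<oplus> (1,0)) \<oplus> (2,0) \<otimes> K \<otimes> (0,1)"

definition dn_c :: "zsqrt \<Rightarrow> zsqrt \<Rightarrow> zsqrt" where
  "dn_c K M = M \<otimes> ((3,0) \<otimes> K \<oplus> (2,0)) \<otimes> ((3,0) \<otimes> K \<oplus> (2,0)) \<oplus> ((2,0) \<otimes> K \<oplus> (2,0)) \<otimes> (0,1)"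

definition dn_d :: "zsqrt \<Rightarrow> zsqrt \<Rightarrow> zsqrt" where
  "dn_d K M = (9,0) \<otimes> M \<otimes> ((2,0) \<otimes> K \<oplus> (1,0)) \<otimes> ((2,0) \<otimes> K \<oplus> (1,0)) \<oplus> ((8,0) \<otimes> K \<oplus> (4,0)) \<otimes> (0,1)"

definition dn_n :: "zsqrt \<Rightarrow> zsqrt \<Rightarrow> zsqrt" where
  "dn_n K M = (10,0) \<oplus> (0,2) \<otimes> ((2,0) \<otimes> K \<oplus> (1,0)) \<otimes> M"

lemma dn_products_plus_n_squares:
  fixes K M :: zsqrt
  defines "A \<equiv> (3,0) \<otimes> K \<oplus> (1,0)" and "B \<equiv> (3,0) \<otimes> K \<oplus> (2,0)" and "T \<equiv> (2,0) \<otimes> K \<oplus> (1,0)"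
  shows "M \<otimes> dn_b K M \<oplus> dn_n K M = (M \<otimes> A \<oplus> (0,1)) \<otimes> (M \<otimes> A \<oplus> (0,1))"
    and "M \<otimes> dn_c K M \<oplus> dn_n K M = (M \<otimes> B \<oplus> (0,1)) \<otimes> (M \<otimes> B \<oplus> (0,1))"
    and "M \<otimes> dn_d K M \<oplus> dn_n K M = ((3,0) \<otimes> M \<otimes> T \<oplus> (0,1)) \<otimes> ((3,0) \<otimes> M \<otimes> T \<oplus> (0,1))"
    and "dn_b K M \<otimes> dn_c K M \<oplus> dn_n K M = (M \<otimes> A \<otimes> B \<oplus> T \<otimes> (0,1)) \<otimes> (M \<otimes> A \<otimes> B \<oplus> T \<otimes> (0,1))"
    and "dn_b K M \<otimes> dn_d K M \<oplus> dn_n K M =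
      ((3,0) \<otimes> M \<otimes> A \<otimes> T \<oplus> ((4,0) \<otimes> K \<oplus> (1,0)) \<otimes> (0,1)) \<otimes> ((3,0) \<otimes> M \<otimes> A \<otimes> T \<oplus> ((4,0) \<otimes> K \<oplus> (1,0)) \<otimes> (0,1))"
    and "dn_c K M \<otimes> dn_d K M \<oplus> dn_n K M =
      ((3,0) \<otimes> M \<otimes> B \<otimes> T \<oplus> ((4,0) \<otimes> K \<oplus> (3,0)) \<otimes> (0,1)) \<otimes> ((3,0) \<otimes> M \<otimes> B \<otimes> T \<oplus> ((4,0) \<otimes> K \<oplus> (3,0)) \<otimes> (0,1))"
  unfolding A_def B_def T_def dn_b_def dn_c_def dn_d_def dn_n_def
  by (cases K; cases M; simp add: zs_mult_def zs_add_def algebra_simps)+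

lemma zs_is_square_both_orders:
  assumes "x \<otimes> y \<oplus> n = w \<otimes> w"
  shows "zs_is_square 10 (x \<otimes> y \<oplus> n)" and "zs_is_square 10 (y \<otimes> x \<oplus> n)"
  using assms zs_mult_commute[of y x] unfolding zs_is_square_def by metis+

lemma is_Dn_quadruple_dn:
  assumes "card {M, dn_b K M, dn_c K M, dn_d K M} = 4" and "(0, 0) \<notin> {M, dn_b K M, dn_c K M, dn_d K M}"
  shows "is_Dn_quadruple 10 (dn_n K M) {M, dn_b K M, dn_c K M, dn_d K M}"
  using assms dn_products_plus_n_squares[THEN zs_is_square_both_orders(1)]
    dn_products_plus_n_squares[THEN zs_is_square_both_orders(2)]
  unfolding is_Dn_quadruple_def by auto

definition dn_polys :: "real \<Rightarrow> real poly set" where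
  "dn_polys \<nu> = {[:4 * \<nu>:], [:\<nu>, - (6 * \<nu> + 4 * sqrt 10), 9 * \<nu> + 4 * sqrt 10:],
    [:\<nu>, 6 * \<nu> + 4 * sqrt 10, 9 * \<nu> + 4 * sqrt 10:], [:0, 0, 4 * (9 * \<nu> + 4 * sqrt 10):]}"

lemma zs_real_dn_scaled:
  fixes K M :: zsqrt
  defines "t \<equiv> 2 * zs_real K + 1"
  shows "(\<lambda>x. 4 * t * zs_real x) ` {M, dn_b K M, dn_c K M, dn_d K M} = (\<lambda>p. poly p t) ` dn_polys (t * zs_real M)"
  unfolding t_def dn_polys_def dn_b_def dn_c_def dn_d_def by (simp add: algebra_simps)

lemma zs_real_dn_n: "zs_real (dn_n K M) = 10 + 2 * sqrt 10 * ((2 * zs_real K + 1) * zs_real M)"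
  by (simp add: dn_n_def algebra_simps)

lemma dn_polys_zs_real:
  assumes "N \<noteq> (0, 0)"
  shows "card (dn_polys (zs_real N)) = 4" and "0 \<notin> dn_polys (zs_real N)"
proof -
  obtain p q where N: "N = (p, q)" by fastforce
  have "9 * q + 4 \<noteq> 0" and "3 * q + 2 \<noteq> 0" by presburger+
  then have "(9 * p, 9 * q + 4) \<noteq> (0, 0)" and "(3 * p, 3 * q + 2) \<noteq> (0, 0)" by simp_all
  then have "zs_real (9 * p, 9 * q + 4) \<noteq> 0" and "zs_real (3 * p, 3 * q + 2) \<noteq> 0"
    unfolding zs_real_eq_0_iff .
  then have "9 * zs_real N + 4 * sqrt 10 \<noteq> 0" and "3 * zs_real N + 2 * sqrt 10 \<noteq> 0"
    unfolding N by (simp_all add: algebra_simps)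
  moreover have "zs_real N \<noteq> 0" using assms by simp
  ultimately show "card (dn_polys (zs_real N)) = 4" and "0 \<notin> dn_polys (zs_real N)"
    by (auto simp: dn_polys_def)
qed

lemma is_Dn_quadruple_dn_if_separated:
  fixes K M :: zsqrt
  defines "t \<equiv> 2 * zs_real K + 1"
  assumes t: "t \<noteq> 0" and card: "card (dn_polys (t * zs_real M)) = 4"
    and inj: "inj_on (\<lambda>p. poly p t) (dn_polys (t * zs_real M))"
    and nonzero: "0 \<notin> (\<lambda>p. poly p t) ` dn_polys (t * zs_real M)"
  shows "is_Dn_quadruple 10 (dn_n K M) {M, dn_b K M, dn_c K M, dn_d K M}"
proof (rule is_Dn_quadruple_dn)
  let ?S = "{M, dn_b K M, dn_c K M, dn_d K M}" and ?f = "\<lambda>x. 4 * t * zs_real x"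
  have "inj ?f"
    using t inj_zs_real by (auto simp: inj_def)
  have image: "?f ` ?S = (\<lambda>p. poly p t) ` dn_polys (t * zs_real M)"
    unfolding t_def by (rule zs_real_dn_scaled)
  have "card ?S = card (?f ` ?S)"
    using card_image[OF inj_on_subset[OF \<open>inj ?f\<close> subset_UNIV]] by (rule sym)
  also have "\<dots> = card (dn_polys (t * zs_real M))"
    unfolding image by (rule card_image[OF inj])
  finally show "card ?S = 4"
    using card by simp
  show "(0, 0) \<notin> ?S"
  proof
    assume "(0, 0) \<in> ?S"
    then have "?f (0, 0) \<in> ?f ` ?S" by (rule imageI)
    with nonzero show False unfolding image by simp
  qed
qed

text \<open>\<open>unit_pow_half j\<close> is (u^j - 1)/2 for u = 19 + 6\<surd>10: from 2K' + 1 = u(2K + 1) we get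
  K' = uK + (u - 1)/2, and (u - 1)/2 = 9 + 3\<surd>10.\<close>

fun unit_pow_half :: "nat \<Rightarrow> zsqrt" where
  "unit_pow_half 0 = (0, 0)"
| "unit_pow_half (Suc j) = (19, 6) \<otimes> unit_pow_half j \<oplus> (9, 3)"

fun conj_unit_pow :: "nat \<Rightarrow> zsqrt" where
  "conj_unit_pow 0 = (1, 0)"
| "conj_unit_pow (Suc j) = (19, -6) \<otimes> conj_unit_pow j"

lemma zs_real_unit_pow_half: "2 * zs_real (unit_pow_half j) + 1 = (19 + 6 * sqrt 10) ^ j"
proof (induction j)
  case (Suc j)
  have "2 * zs_real (unit_pow_half (Suc j)) + 1 = (19 + 6 * sqrt 10) * (2 * zs_real (unit_pow_half j) + 1)"
    by (simp add: algebra_simps)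
  with Suc show ?case by simp
qed simp

lemma zs_real_conj_unit_pow: "zs_real (conj_unit_pow j) * (19 + 6 * sqrt 10) ^ j = 1"
proof (induction j)
  case (Suc j)
  have "zs_real (conj_unit_pow (Suc j)) * (19 + 6 * sqrt 10) ^ Suc j
      = ((19 - 6 * sqrt 10) * (19 + 6 * sqrt 10)) * (zs_real (conj_unit_pow j) * (19 + 6 * sqrt 10) ^ j)"
    by (simp add: algebra_simps)
  also have "\<dots> = 1"
    using Suc by (simp add: algebra_simps)
  finally show ?case .
qed simp

lemma inj_mult_conj_unit_pow:
  assumes "N \<noteq> (0, 0)"
  shows "inj (\<lambda>j. N \<otimes> conj_unit_pow j)"
proof (rule injI)
  let ?u = "19 + 6 * sqrt 10 :: real" and ?c = "\<lambda>j. zs_real (conj_unit_pow j)"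
  fix i j assume "N \<otimes> conj_unit_pow i = N \<otimes> conj_unit_pow j"
  then have "zs_real N * ?c i = zs_real N * ?c j" by (metis zs_real_mult)
  then have "?c i = ?c j" using assms by simp
  then have "?c i * ?u ^ i = ?c i * ?u ^ j" using zs_real_conj_unit_pow[of i] zs_real_conj_unit_pow[of j] by simp
  moreover have "?c i \<noteq> 0" using zs_real_conj_unit_pow[of i] by auto
  moreover have "1 < ?u" by (simp add: add_pos_nonneg)
  ultimately show "i = j" by simp
qed

lemma infinite_Dn_quadruples:
  assumes "N \<noteq> (0, 0)"
  shows "infinite {S. is_Dn_quadruple 10 ((10, 0) \<oplus> (0, 2) \<otimes> N) S}"
proof -
  define u :: real where "u = 19 + 6 * sqrt 10"
  define K where "K j = unit_pow_half j" for j
  define M where "M j = N \<otimes> conj_unit_pow j" for j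
  define \<nu> where "\<nu> = zs_real N"
  have "1 < u" unfolding u_def by (simp add: add_pos_nonneg)
  have "\<nu> \<noteq> 0" unfolding \<nu>_def using assms by simp
  have t: "2 * zs_real (K j) + 1 = u ^ j" for j
    unfolding K_def u_def by (rule zs_real_unit_pow_half)
  have \<nu>: "u ^ j * zs_real (M j) = \<nu>" for j
    using zs_real_conj_unit_pow[of j] unfolding M_def \<nu>_def u_def by (simp add: algebra_simps)
  have "zs_real (dn_n (K j) (M j)) = zs_real ((10, 0) \<oplus> (0, 2) \<otimes> N)" for j
    unfolding zs_real_dn_n t \<nu> \<nu>_def by (simp add: algebra_simps)
  then have n: "dn_n (K j) (M j) = (10, 0) \<oplus> (0, 2) \<otimes> N" for j
    by (rule injD[OF inj_zs_real])
  have card: "card (dn_polys \<nu>) = 4" and "0 \<notin> dn_polys \<nu>"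
    unfolding \<nu>_def using dn_polys_zs_real[OF assms] .
  then have "finite (dn_polys \<nu>)" by (intro card_ge_0_finite) simp
  then obtain J where separated: "\<And>j. j \<ge> J \<Longrightarrow>
      inj_on (\<lambda>p. poly p (u ^ j)) (dn_polys \<nu>) \<and> 0 \<notin> (\<lambda>p. poly p (u ^ j)) ` dn_polys \<nu>"
    using eventually_poly_power_separates[OF _ \<open>0 \<notin> dn_polys \<nu>\<close> \<open>1 < u\<close>]
    unfolding eventually_sequentially by blast
  define Q where "Q j = {M j, dn_b (K j) (M j), dn_c (K j) (M j), dn_d (K j) (M j)}" for j
  have quadruple: "is_Dn_quadruple 10 ((10, 0) \<oplus> (0, 2) \<otimes> N) (Q j)" if "j \<ge> J" for j
    using is_Dn_quadruple_dn_if_separated[of "K j" "M j"] separated[OF that] card \<open>1 < u\<close>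
    unfolding Q_def t \<nu> n by simp
  have "inj_on M {J..}"
    unfolding M_def using inj_mult_conj_unit_pow[OF assms] by (rule inj_on_subset) simp
  show ?thesis
  proof (rule infinite_family_if_inj_selection)
    show "\<forall>j\<in>{J..}. M j \<in> Q j \<and> Q j \<in> {S. is_Dn_quadruple 10 ((10, 0) \<oplus> (0, 2) \<otimes> N) S}"
      using quadruple by (simp add: Q_def)
  qed (use \<open>inj_on M {J..}\<close> is_Dn_quadruple_finite in \<open>auto simp: infinite_Ici\<close>)
qed

theorem mainTheorem5:
  shows "(\<forall>m k :: int. m mod 5 = 4 \<and> k mod 5 = 2 \<longrightarrow>
            infinite {S. is_Dn_quadruple 10 (4 * (12 * m + 9) + 2, 4 * (6 * k + 3)) S})
       \<and> (\<forall>m k :: int. m mod 5 = 1 \<and> k mod 5 = 0 \<longrightarrow>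
            infinite {S. is_Dn_quadruple 10 (48 * m + 2, 24 * k) S})"
proof (intro conjI allI impI)
  fix m k :: int
  assume "m mod 5 = 4 \<and> k mod 5 = 2"
  then have "5 dvd 12 * m + 7" by presburger
  then obtain q where "12 * m + 7 = 5 * q" by (elim dvdE)
  then have "(4 * (12 * m + 9) + 2, 4 * (6 * k + 3)) = (10, 0) \<oplus> (0, 2) \<otimes> (12 * k + 6, q)"
    by (simp add: zs_add_def zs_mult_def)
  moreover have "(12 * k + 6, q) \<noteq> (0, 0)" by (simp; presburger)
  ultimately show "infinite {S. is_Dn_quadruple 10 (4 * (12 * m + 9) + 2, 4 * (6 * k + 3)) S}"
    using infinite_Dn_quadruples by metis
next
  fix m k :: int
  assume "m mod 5 = 1 \<and> k mod 5 = 0"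
  then have "5 dvd 12 * m - 2" by presburger
  then obtain q where q: "12 * m - 2 = 5 * q" by (elim dvdE)
  then have "(48 * m + 2, 24 * k) = (10, 0) \<oplus> (0, 2) \<otimes> (12 * k, q)"
    by (simp add: zs_add_def zs_mult_def)
  moreover have "(12 * k, q) \<noteq> (0, 0)" using q by (simp; presburger)
  ultimately show "infinite {S. is_Dn_quadruple 10 (48 * m + 2, 24 * k) S}"
    using infinite_Dn_quadruples by metis
qed

end
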